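(* Let $A$ be an $n\times n$ ASM and let $z_n=(n,n-1,\ldots,2,1)^T$. If $z_n^TA=z_n^TP$ for some $n\times n$ permutation matrix $P$, then $A=P$.
   Context: An $n\times n$ alternating sign matrix (ASM) is an $n\times n$ matrix with entries in $\{0,1,-1\}$ such that in every row and column the nonzeros alternate in sign, beginning and ending with $+1$. *)

theory Defs
  imports Main "HOL-Combinatorics.Permutations"
begin

(* n x n integer matrices are represented as functions nat => nat => int,
   with rows/columns indexed by 0..n-1; entries outside are irrelevant. *)

definition alternating_sign_list :: "int list \<Rightarrow> bool" where
  "alternating_sign_list xs \<longleftrightarrow>
     xs \<noteq> [] \<and> hd xs = 1 \<and> last xs = 1 \<and>
     (\<forall>k. Suc k < length xs \<longrightarrow> xs ! Suc k = - (xs ! k))"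

definition row_list :: "nat \<Rightarrow> (nat \<Rightarrow> nat \<Rightarrow> int) \<Rightarrow> nat \<Rightarrow> int list" where
  "row_list n A i = map (\<lambda>j. A i j) [0..<n]"

definition col_list :: "nat \<Rightarrow> (nat \<Rightarrow> nat \<Rightarrow> int) \<Rightarrow> nat \<Rightarrow> int list" where
  "col_list n A j = map (\<lambda>i. A i j) [0..<n]"

definition is_ASM :: "nat \<Rightarrow> (nat \<Rightarrow> nat \<Rightarrow> int) \<Rightarrow> bool" where
  "is_ASM n A \<longleftrightarrow>
     (\<forall>i<n. \<forall>j<n. A i j \<in> {0, 1, -1}) \<and>
     (\<forall>i<n. alternating_sign_list (filter (\<lambda>x. x \<noteq> 0) (row_list n A i))) \<and>
     (\<forall>j<n. alternating_sign_list (filter (\<lambda>x. x \<noteq> 0) (col_list n A j)))"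

definition perm_matrix :: "(nat \<Rightarrow> nat) \<Rightarrow> nat \<Rightarrow> nat \<Rightarrow> int" where
  "perm_matrix \<sigma> i j = (if j = \<sigma> i then 1 else 0)"

definition is_perm_matrix :: "nat \<Rightarrow> (nat \<Rightarrow> nat \<Rightarrow> int) \<Rightarrow> bool" where
  "is_perm_matrix n P \<longleftrightarrow>
     (\<exists>\<sigma>. \<sigma> permutes {..<n} \<and> (\<forall>i<n. \<forall>j<n. P i j = perm_matrix \<sigma> i j))"

(* z_n = (n, n-1, ..., 1)^T; with 0-based index i its entry is n - i *)
definition zvec :: "nat \<Rightarrow> nat \<Rightarrow> int" where
  "zvec n i = int n - int i"

definition zT_mult :: "nat \<Rightarrow> (nat \<Rightarrow> nat \<Rightarrow> int) \<Rightarrow> nat \<Rightarrow> int" where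
  "zT_mult n A j = (\<Sum>i<n. zvec n i * A i j)"

end

theory Submission
  imports Defs
begin

text \<open>Let \<open>F j k\<close> and \<open>G j k\<close> be the partial sums of the first \<open>k + 1\<close> entries of column \<open>j\<close>
  of \<open>A\<close> and of the permutation matrix \<open>P\<close>. For an ASM, \<open>F j k \<in> {0, 1}\<close>, while \<open>G j \<cdot>\<close> is the
  step function jumping from 0 to 1 at the row \<open>r j\<close> of the 1 in column \<open>j\<close>. Since the entries
  of \<open>z\<close> decrease by one, \<open>z\<^sup>TA = z\<^sup>TP\<close> says \<open>\<Sum>\<^sub>k F j k = \<Sum>\<^sub>k G j k\<close> for every \<open>j\<close>; since
  all row sums of \<open>A\<close> and \<open>P\<close> are 1, also \<open>\<Sum>\<^sub>j F j k = k + 1 = \<Sum>\<^sub>j G j k\<close> for every \<open>k\<close>.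
  Now \<open>G j k - F j k\<close> is \<open>\<ge> 0\<close> for \<open>k \<ge> r j\<close> and \<open>\<le> 0\<close> for \<open>k < r j\<close>, so all products
  \<open>(2k + 1 - 2 r j) (G j k - F j k)\<close> are nonnegative; their total vanishes by the two margin
  conditions, hence \<open>F = G\<close>, and therefore \<open>A = P\<close>.\<close>

lemma alternating_sign_list_nth:
  assumes "alternating_sign_list ys" "k < length ys"
  shows "ys ! k = (-1) ^ k"
  using assms(2)
proof (induction k)
  case 0
  then show ?case using assms(1) by (cases ys) (auto simp: alternating_sign_list_def)
next
  case (Suc k)
  then show ?case using assms(1) by (auto simp: alternating_sign_list_def)
qed

lemma alternating_sign_list_eq_map:
  assumes "alternating_sign_list ys"
  shows "ys = map (\<lambda>k. (-1) ^ k) [0..<length ys]"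
  using alternating_sign_list_nth[OF assms] by (intro nth_equalityI) auto

lemma alternating_sign_list_odd_length:
  assumes "alternating_sign_list ys"
  shows "odd (length ys)"
proof -
  have "ys \<noteq> []" "last ys = 1" using assms by (auto simp: alternating_sign_list_def)
  then have "(-1 :: int) ^ (length ys - 1) = 1"
    using alternating_sign_list_nth[OF assms, of "length ys - 1"] by (simp add: last_conv_nth)
  then have "even (length ys - 1)" by (metis neg_one_odd_power one_neq_neg_one)
  with \<open>ys \<noteq> []\<close> show ?thesis by (cases "length ys") auto
qed

lemma sum_list_alternating_signs: "sum_list (map (\<lambda>k. (-1 :: int) ^ k) [0..<l]) = of_bool (odd l)"
  by (induction l) auto

lemma sum_list_filter_nonzero: "sum_list (filter (\<lambda>x. x \<noteq> 0) xs) = sum_list (xs :: int list)"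
  by (induction xs) auto

lemma filter_take_is_take_filter:
  "\<exists>l. filter P (take m xs) = take l (filter P xs)"
proof -
  have "filter P xs = filter P (take m xs) @ filter P (drop m xs)"
    by (metis append_take_drop_id filter_append)
  then show ?thesis by (metis append_eq_conv_conj)
qed

lemma alternating_sign_list_prefix_sum:
  fixes xs :: "int list"
  assumes "alternating_sign_list (filter (\<lambda>x. x \<noteq> 0) xs)"
  shows "sum_list (take m xs) \<in> {0, 1}"
proof -
  let ?ys = "filter (\<lambda>x. x \<noteq> 0) xs"
  obtain l where l: "filter (\<lambda>x. x \<noteq> 0) (take m xs) = take l ?ys"
    using filter_take_is_take_filter by blast
  have "sum_list (take m xs) = sum_list (take l ?ys)"
    by (metis l sum_list_filter_nonzero)
  also have "\<dots> = sum_list (map (\<lambda>k. (-1) ^ k) [0..<min l (length ?ys)])"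
    by (subst alternating_sign_list_eq_map[OF assms])
      (cases "l \<le> length ?ys"; simp add: take_map)
  finally show ?thesis by (simp add: sum_list_alternating_signs)
qed

lemma alternating_sign_list_sum:
  fixes xs :: "int list"
  assumes "alternating_sign_list (filter (\<lambda>x. x \<noteq> 0) xs)"
  shows "sum_list xs = 1"
  using alternating_sign_list_eq_map[OF assms] alternating_sign_list_odd_length[OF assms]
  by (metis sum_list_alternating_signs sum_list_filter_nonzero of_bool_eq(2))

lemma sum_list_map_upt_take: "k < n \<Longrightarrow> sum_list (take (Suc k) (map f [0..<n])) = (\<Sum>i\<le>k. f i)"
  by (simp add: take_map interv_sum_list_conv_sum_set_nat atLeast0LessThan
      flip: lessThan_Suc_atMost del: upt_Suc)

lemma is_ASM_column_partial_sum:
  assumes "is_ASM n A" "j < n" "k < n"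
  shows "(\<Sum>i\<le>k. A i j) \<in> {0, 1}"
proof -
  have "alternating_sign_list (filter (\<lambda>x. x \<noteq> 0) (col_list n A j))"
    using assms unfolding is_ASM_def by blast
  from alternating_sign_list_prefix_sum[OF this, of "Suc k"] show ?thesis
    using assms(3) by (simp add: col_list_def sum_list_map_upt_take)
qed

lemma is_ASM_row_sum:
  assumes "is_ASM n A" "i < n"
  shows "(\<Sum>j<n. A i j) = 1"
proof -
  have "alternating_sign_list (filter (\<lambda>x. x \<noteq> 0) (row_list n A i))"
    using assms unfolding is_ASM_def by blast
  from alternating_sign_list_sum[OF this] show ?thesis
    by (simp add: row_list_def sum_list_sum_nth atLeast0LessThan)
qed

lemma perm_matrix_row_sum:
  assumes "\<sigma> permutes {..<n}" "i < n"
  shows "(\<Sum>j<n. perm_matrix \<sigma> i j) = 1"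
  using permutes_in_image[OF assms(1)] assms(2) by (simp add: perm_matrix_def)

lemma perm_matrix_partial_column_sum:
  assumes "\<sigma> permutes S"
  shows "(\<Sum>i\<le>k. perm_matrix \<sigma> i j) = of_bool (inv \<sigma> j \<le> k)"
proof -
  have "(\<Sum>i\<le>k. perm_matrix \<sigma> i j) = (\<Sum>i\<le>k. of_bool (i = inv \<sigma> j))"
    using permutes_inv_eq[OF assms, of j] by (intro sum.cong) (auto simp: perm_matrix_def eq_commute)
  then show ?thesis by simp
qed

lemma sum_partial_column_sums:
  fixes M :: "nat \<Rightarrow> nat \<Rightarrow> int"
  assumes "\<And>i. i < n \<Longrightarrow> (\<Sum>j<n. M i j) = 1" "k < n"
  shows "(\<Sum>j<n. \<Sum>i\<le>k. M i j) = int (Suc k)"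
proof -
  have "(\<Sum>j<n. \<Sum>i\<le>k. M i j) = (\<Sum>i\<le>k. \<Sum>j<n. M i j)"
    by (rule sum.swap)
  also have "\<dots> = (\<Sum>i\<le>k. 1)"
    using assms by (intro sum.cong) auto
  finally show ?thesis by simp
qed

lemma zT_mult_eq_sum_partial_column_sums: "zT_mult n A j = (\<Sum>k<n. \<Sum>i\<le>k. A i j)"
proof (induction n)
  case (Suc n)
  have "zT_mult (Suc n) A j = (\<Sum>i<Suc n. (int n - int i) * A i j + A i j)"
    unfolding zT_mult_def zvec_def by (intro sum.cong) (auto simp: algebra_simps)
  also have "\<dots> = zT_mult n A j + (\<Sum>i\<le>n. A i j)"
    by (simp add: sum.distrib zT_mult_def zvec_def flip: lessThan_Suc_atMost)
  finally show ?case using Suc by simp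
qed (simp add: zT_mult_def)

lemma eq_if_partial_sums_eq:
  fixes a b :: "nat \<Rightarrow> 'a :: ab_group_add"
  assumes "\<And>k. k < n \<Longrightarrow> (\<Sum>i\<le>k. a i) = (\<Sum>i\<le>k. b i)" "i < n"
  shows "a i = b i"
proof (cases i)
  case 0
  then show ?thesis using assms(1)[of 0] assms(2) by simp
next
  case (Suc i')
  then show ?thesis using assms(1)[of i] assms(1)[of i'] assms(2) by simp
qed

lemma zero_one_eq_step_indicators_if_same_margins:
  fixes F :: "'j \<Rightarrow> nat \<Rightarrow> int" and r :: "'j \<Rightarrow> nat"
  assumes "finite J"
    and zero_one: "\<And>j k. j \<in> J \<Longrightarrow> k < m \<Longrightarrow> F j k \<in> {0, 1}"
    and sums_over_k: "\<And>j. j \<in> J \<Longrightarrow> (\<Sum>k<m. F j k) = (\<Sum>k<m. of_bool (r j \<le> k))"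
    and sums_over_j: "\<And>k. k < m \<Longrightarrow> (\<Sum>j\<in>J. F j k) = (\<Sum>j\<in>J. of_bool (r j \<le> k))"
    and "j \<in> J" "k < m"
  shows "F j k = of_bool (r j \<le> k)"
proof -
  define d where "d j k = of_bool (r j \<le> k) - F j k" for j k
  define w where "w j k = 2 * int k + 1 - 2 * int (r j)" for j k
  have nonneg: "0 \<le> w j k * d j k" if "j \<in> J" "k < m" for j k
    using zero_one[OF that] by (auto simp: w_def d_def)
  have d_sum_k: "(\<Sum>k<m. d j k) = 0" if "j \<in> J" for j
    using sums_over_k[OF that] by (simp add: d_def sum_subtractf)
  have d_sum_j: "(\<Sum>j\<in>J. d j k) = 0" if "k < m" for k
    using sums_over_j[OF that] by (simp add: d_def sum_subtractf)
  have "(\<Sum>j\<in>J. \<Sum>k<m. w j k * d j k)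
      = (\<Sum>j\<in>J. \<Sum>k<m. (2 * int k + 1) * d j k) - (\<Sum>j\<in>J. 2 * int (r j) * (\<Sum>k<m. d j k))"
    by (simp add: w_def left_diff_distrib sum_subtractf sum_distrib_left)
  also have "\<dots> = (\<Sum>k<m. (2 * int k + 1) * (\<Sum>j\<in>J. d j k))"
    using d_sum_k by (simp add: sum_distrib_left sum.swap[of _ J])
  also have "\<dots> = 0"
    using d_sum_j by simp
  finally have "(\<Sum>j\<in>J. \<Sum>k<m. w j k * d j k) = 0" .
  then have "(\<Sum>k<m. w j k * d j k) = 0"
    using \<open>finite J\<close> \<open>j \<in> J\<close> by (subst (asm) sum_nonneg_eq_0_iff) (auto intro: sum_nonneg nonneg)
  then have "w j k * d j k = 0"
    using sum_nonneg_eq_0_iff[of "{..<m}" "\<lambda>k. w j k * d j k"] nonneg \<open>j \<in> J\<close> \<open>k < m\<close>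
    by blast
  moreover have "w j k \<noteq> 0"
    unfolding w_def by presburger
  ultimately show ?thesis
    by (simp add: d_def)
qed

lemma is_ASM_eq_perm_matrix_if_zT_mult_eq:
  assumes "is_ASM n A" "\<sigma> permutes {..<n}"
    and "\<And>j. j < n \<Longrightarrow> zT_mult n A j = zT_mult n (perm_matrix \<sigma>) j"
    and "i < n" "j < n"
  shows "A i j = perm_matrix \<sigma> i j"
proof -
  have partial_sums: "(\<Sum>i\<le>k. A i j) = (\<Sum>i\<le>k. perm_matrix \<sigma> i j)" if "j < n" "k < n" for j k
    unfolding perm_matrix_partial_column_sum[OF assms(2)]
  proof (rule zero_one_eq_step_indicators_if_same_margins
      [where J = "{..<n}" and m = n and F = "\<lambda>j k. \<Sum>i\<le>k. A i j"])
    show "(\<Sum>k<n. \<Sum>i\<le>k. A i j) = (\<Sum>k<n. of_bool (inv \<sigma> j \<le> k))" if "j \<in> {..<n}" for j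
      using assms(3)[of j] that
      by (simp add: zT_mult_eq_sum_partial_column_sums perm_matrix_partial_column_sum[OF assms(2)])
    show "(\<Sum>j<n. \<Sum>i\<le>k. A i j) = (\<Sum>j<n. of_bool (inv \<sigma> j \<le> k))" if "k < n" for k
    proof -
      have "(\<Sum>j<n. \<Sum>i\<le>k. A i j) = int (Suc k)"
        by (rule sum_partial_column_sums) (use is_ASM_row_sum[OF assms(1)] that in auto)
      also have "\<dots> = (\<Sum>j<n. \<Sum>i\<le>k. perm_matrix \<sigma> i j)"
        by (rule sum_partial_column_sums[symmetric]) (use perm_matrix_row_sum[OF assms(2)] that in auto)
      finally show ?thesis
        by (simp only: perm_matrix_partial_column_sum[OF assms(2)])
    qed
  qed (use that is_ASM_column_partial_sum[OF assms(1)] in auto)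
  show ?thesis
    by (rule eq_if_partial_sums_eq[where a = "\<lambda>i. A i j" and b = "\<lambda>i. perm_matrix \<sigma> i j"])
      (use partial_sums assms(4,5) in auto)
qed

theorem mainTheorem8:
  fixes n :: nat and A P :: "nat \<Rightarrow> nat \<Rightarrow> int"
  assumes "is_ASM n A"
    and "is_perm_matrix n P"
    and "\<forall>j<n. zT_mult n A j = zT_mult n P j"
  shows "\<forall>i<n. \<forall>j<n. A i j = P i j"
proof -
  obtain \<sigma> where \<sigma>: "\<sigma> permutes {..<n}" and P: "\<forall>i<n. \<forall>j<n. P i j = perm_matrix \<sigma> i j"
    using assms(2) unfolding is_perm_matrix_def by blast
  have "zT_mult n P j = zT_mult n (perm_matrix \<sigma>) j" if "j < n" for j
    using P that unfolding zT_mult_def by (intro sum.cong) auto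
  with assms(3) have "A i j = perm_matrix \<sigma> i j" if "i < n" "j < n" for i j
    using is_ASM_eq_perm_matrix_if_zT_mult_eq[OF assms(1) \<sigma>] that by auto
  with P show ?thesis
    by simp
qed

end
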